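(* Let $\mathcal{H}=(X,Y,E)$ be a bipartite graph with $Y=\{y_1,\dots,y_\ell\}$, let $R$ be a relation on attributes $X$, and let $\mathcal{E}_{\mathcal{H}}(R)=\{L(v) : v \text{ a node of } T_{\mathcal{H}}(R),\ L(v)\neq\bot^*\}$. Then $\mathcal{E}_{\mathcal{H}}(R)$ is $\mathcal{H}$-equivalent to $R$ and $|\mathcal{E}_{\mathcal{H}}(R)|\le e\cdot\phi(\mathcal{H})$, where $\phi(\mathcal{H})=\ell!\prod_{j\in[\ell]} d_{\mathcal{H}}(y_j)$.
   Context: $d_{\mathcal{H}}(v)$ is the degree of $v$ in $\mathcal{H}$; $t[z]$ is the value of tuple $t$ at attribute $z$; $e$ is Euler's number. A tuple $t$ over $Y$ is $\mathcal{H}$-accepted by a relation $R$ on $X$ if some $t_R\in R$ satisfies $t_R[x_i]\neq t[y_j]$ for all $(x_i,y_j)\in E$; relations $R_1,R_2$ on $X$ are $\mathcal{H}$-equivalent if they $\mathcal{H}$-accept exactly the same tuples over $Y$. Construction of $T_{\mathcal{H}}(R)$: a rooted tree whose nodes have labels $L(v)$ that are either tuples of $R$ or the symbol $\bot^*$, and whose edges have labels $(y_j,a)$. Initially it is a single root labeled $\bot^*$. The tuples of $R$ are scanned one by one in an arbitrary order; when $t$ is scanned, every leaf $v$ with $L(v)=\bot^*$, whose root-to-$v$ path has edge labels $(y_{j_1},a_{j_1}),\dots,(y_{j_p},a_{j_p})$, is processed: if there exist $j\in\{j_1,\dots,j_p\}$ and $(x_i,y_j)\in E$ with $t[x_i]=a_j$,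 nothing is done; otherwise set $L(v)=t$, and if $p<\ell$, for every edge $(x_i,y_j)\in E$ with $j\notin\{j_1,\dots,j_p\}$ add a new child of $v$ labeled $\bot^*$ via an edge labeled $(y_j,t[x_i])$. The construction stops when all tuples are scanned or no leaf has label $\bot^*$. *)

theory Defs
  imports Complex_Main
begin

(* Bipartite graph H = (X, Y, E) with E \<subseteq> X \<times> Y.
   Tuples over X: functions 'x \<Rightarrow> 'v; tuples over Y: functions 'y \<Rightarrow> 'v. *)

definition H_accepts :: "('x \<times> 'y) set \<Rightarrow> ('x \<Rightarrow> 'v) set \<Rightarrow> ('y \<Rightarrow> 'v) \<Rightarrow> bool" where
  "H_accepts E R t \<longleftrightarrow> (\<exists>tR\<in>R. \<forall>(x, y)\<in>E. tR x \<noteq> t y)"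

definition H_equivalent :: "('x \<times> 'y) set \<Rightarrow> ('x \<Rightarrow> 'v) set \<Rightarrow> ('x \<Rightarrow> 'v) set \<Rightarrow> bool" where
  "H_equivalent E R1 R2 \<longleftrightarrow> (\<forall>t. H_accepts E R1 t = H_accepts E R2 t)"

definition degree :: "'x set \<Rightarrow> ('x \<times> 'y) set \<Rightarrow> 'y \<Rightarrow> nat" where
  "degree X E y = card {x\<in>X. (x, y) \<in> E}"

definition phi :: "'x set \<Rightarrow> 'y set \<Rightarrow> ('x \<times> 'y) set \<Rightarrow> nat" where
  "phi X Y E = fact (card Y) * (\<Prod>y\<in>Y. degree X E y)"

(* A node is identified by the list of graph edges (x_i, y_j)
   that created the edges on its root-to-node path; the edge label of the k-th
   edge (x_i,y_j) is (y_j, L(parent)[x_i]).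
   A tree maps a node to: None (node absent), Some None (label bottom-star),
   Some (Some t) (label = the tuple t). *)
type_synonym ('x, 'y, 'v) tree = "('x \<times> 'y) list \<Rightarrow> ('x \<Rightarrow> 'v) option option"

definition init_tree :: "('x, 'y, 'v) tree" where
  "init_tree = (\<lambda>p. if p = [] then Some None else None)"

definition edge_val :: "('x, 'y, 'v) tree \<Rightarrow> ('x \<times> 'y) list \<Rightarrow> nat \<Rightarrow> 'v" where
  "edge_val T p k = (case T (take k p) of Some (Some s) \<Rightarrow> s (fst (p ! k)) | _ \<Rightarrow> undefined)"

definition blocked :: "('x \<times> 'y) set \<Rightarrow> ('x, 'y, 'v) tree \<Rightarrow> ('x \<times> 'y) list \<Rightarrow> ('x \<Rightarrow> 'v) \<Rightarrow> bool" where
  "blocked E T p t \<longleftrightarrow> (\<exists>k<length p. \<exists>x. (x, snd (p ! k)) \<in> E \<and> t x = edge_val T p k)"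

(* processing all bottom-star-leaves when tuple t is scanned; l = |Y| *)
definition scan_step :: "('x \<times> 'y) set \<Rightarrow> nat \<Rightarrow> ('x \<Rightarrow> 'v) \<Rightarrow> ('x, 'y, 'v) tree \<Rightarrow> ('x, 'y, 'v) tree" where
  "scan_step E l t T = (\<lambda>q.
     if T q = Some None \<and> \<not> blocked E T q t then Some (Some t)
     else if q \<noteq> [] \<and> T (butlast q) = Some None \<and> \<not> blocked E T (butlast q) t
             \<and> length (butlast q) < l \<and> last q \<in> E \<and> snd (last q) \<notin> snd ` set (butlast q)
          then Some None
     else T q)"

(* T_H(R) for the scanning order ts (once no bottom-star leaf remains, steps do nothing) *)
definition build_tree :: "('x \<times> 'y) set \<Rightarrow> nat \<Rightarrow> ('x \<Rightarrow> 'v) list \<Rightarrow> ('x, 'y, 'v) tree" where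
  "build_tree E l ts = fold (scan_step E l) ts init_tree"

definition extracted :: "('x \<times> 'y) set \<Rightarrow> nat \<Rightarrow> ('x \<Rightarrow> 'v) list \<Rightarrow> ('x \<Rightarrow> 'v) set" where
  "extracted E l ts = {s. \<exists>p. build_tree E l ts p = Some (Some s)}"

end

theory Submission
  imports Defs
begin

text \<open>
  A node of \<open>T\<^sub>\<H>(R)\<close> is determined by its root path, a sequence of edges of \<open>\<H>\<close> whose
  \<open>Y\<close>-endpoints are pairwise distinct.  Choosing the \<open>k\<close> endpoints in order and then one of
  \<open>d\<^sub>\<H>(y\<^sub>j)\<close> edges at each of them gives at most \<open>\<Sum>\<^sub>k \<ell>!/(\<ell>-k)! \<cdot> \<Prod>\<^sub>j d\<^sub>\<H>(y\<^sub>j) \<le> e \<cdot> \<phi>(\<H>)\<close>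
  such sequences, which bounds the number of labels.

  All labels lie in \<open>R\<close>, so only one direction of the equivalence needs work.  If \<open>t\<^sub>R \<in> R\<close>
  accepts \<open>t\<close>, follow from the root the path whose edge labels are \<open>(y\<^sub>j, t[y\<^sub>j])\<close>.  Since \<open>t\<^sub>R\<close>
  differs from \<open>t\<close> along every edge, \<open>t\<^sub>R\<close> is blocked at no node of this path, so every such node
  carries a tuple label \<open>s\<close>.  If \<open>s\<close> does not accept \<open>t\<close>, some edge \<open>(x\<^sub>i, y\<^sub>j)\<close> has
  \<open>s[x\<^sub>i] = t[y\<^sub>j]\<close>; as \<open>s\<close> itself is not blocked, \<open>y\<^sub>j\<close> is new on the path, and the child created
  for \<open>(x\<^sub>i, y\<^sub>j)\<close> continues the path.  The path has length at most \<open>\<ell>\<close>, so it ends at a label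
  accepting \<open>t\<close>.
\<close>

text \<open>\<open>arrangements n = \<Sum>\<^sub>k n!/k!\<close> counts the sequences of distinct elements of an \<open>n\<close>-set.\<close>

definition arrangements :: "nat \<Rightarrow> real" where
  "arrangements n = fact n * (\<Sum>k\<le>n. 1 / fact k)"

lemma arrangements_0: "arrangements 0 = 1"
  by (simp add: arrangements_def)

lemma arrangements_Suc: "arrangements (Suc n) = 1 + real (Suc n) * arrangements n"
proof -
  have "(fact n :: real) + fact n * real n \<noteq> 0"
    by (metis add_pos_nonneg fact_gt_zero less_irrefl mult_nonneg_nonneg of_nat_0_le_iff fact_ge_zero)
  then show ?thesis by (simp add: arrangements_def algebra_simps)
qed

lemma arrangements_le_exp: "arrangements n \<le> exp 1 * fact n"
proof -
  have sums: "(\<lambda>n. 1 / fact n :: real) sums exp 1"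
    using exp_converges[of "1::real"] by (simp add: divide_inverse)
  have "(\<Sum>k\<le>n. 1 / fact k :: real) \<le> exp 1"
    using sum_le_suminf[OF sums_summable[OF sums], of "{..n}"] sums_unique[OF sums] by simp
  then show ?thesis unfolding arrangements_def by (simp add: mult.commute)
qed

definition edge_paths :: "('x \<times> 'y) set \<Rightarrow> 'y set \<Rightarrow> ('x \<times> 'y) list set" where
  "edge_paths E S = {p. set p \<subseteq> E \<and> distinct (map snd p) \<and> snd ` set p \<subseteq> S}"

lemma edge_paths_finite:
  assumes "finite E" "finite S"
  shows "finite (edge_paths E S)"
proof -
  have "edge_paths E S \<subseteq> {p. set p \<subseteq> E \<and> length p \<le> card S}"
  proof
    fix p assume "p \<in> edge_paths E S"
    then have p: "set p \<subseteq> E" "distinct (map snd p)" "snd ` set p \<subseteq> S"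
      by (auto simp: edge_paths_def)
    have "length p = card (set (map snd p))" using p(2) distinct_card by fastforce
    also have "\<dots> \<le> card S" using p(3) assms(2) by (simp add: card_mono)
    finally show "p \<in> {p. set p \<subseteq> E \<and> length p \<le> card S}" using p by simp
  qed
  then show ?thesis using finite_lists_length_le[OF assms(1)] finite_subset by blast
qed

lemma edge_paths_subset_Cons:
  assumes "E \<subseteq> X \<times> UNIV"
  shows "edge_paths E S \<subseteq>
    insert [] (\<Union>y\<in>S. \<Union>x\<in>{x\<in>X. (x, y) \<in> E}. Cons (x, y) ` edge_paths E (S - {y}))"
proof
  fix p assume p: "p \<in> edge_paths E S"
  show "p \<in> insert [] (\<Union>y\<in>S. \<Union>x\<in>{x\<in>X. (x, y) \<in> E}. Cons (x, y) ` edge_paths E (S - {y}))"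
  proof (cases p)
    case Nil then show ?thesis by simp
  next
    case (Cons e q)
    obtain x y where e: "e = (x, y)" by fastforce
    have "q \<in> edge_paths E (S - {y})" "(x, y) \<in> E" "y \<in> S"
      using p Cons e by (auto simp: edge_paths_def)
    with assms show ?thesis using Cons e by blast
  qed
qed

lemma card_edge_paths_rec:
  assumes "finite X" "finite E" "E \<subseteq> X \<times> UNIV" "finite S"
  shows "card (edge_paths E S) \<le> Suc (\<Sum>y\<in>S. degree X E y * card (edge_paths E (S - {y})))"
proof -
  let ?U = "\<Union>y\<in>S. \<Union>x\<in>{x\<in>X. (x, y) \<in> E}. Cons (x, y) ` edge_paths E (S - {y})"
  have fin: "finite ?U"
    using assms by (intro finite_UN_I finite_imageI edge_paths_finite) auto
  have "card (edge_paths E S) \<le> card (insert [] ?U)"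
    using card_mono[OF _ edge_paths_subset_Cons[OF assms(3)]] fin by blast
  also have "\<dots> \<le> Suc (card ?U)"
    using fin by (simp add: card_insert_if)
  also have "card ?U \<le> (\<Sum>y\<in>S. card (\<Union>x\<in>{x\<in>X. (x, y) \<in> E}. Cons (x, y) ` edge_paths E (S - {y})))"
    using assms(4) by (intro card_UN_le)
  also have "\<dots> \<le> (\<Sum>y\<in>S. \<Sum>x\<in>{x\<in>X. (x, y) \<in> E}. card (Cons (x, y) ` edge_paths E (S - {y})))"
    using assms(1) by (intro sum_mono card_UN_le) auto
  also have "\<dots> \<le> (\<Sum>y\<in>S. \<Sum>x\<in>{x\<in>X. (x, y) \<in> E}. card (edge_paths E (S - {y})))"
    by (intro sum_mono card_image_le edge_paths_finite) (use assms in auto)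
  also have "\<dots> = (\<Sum>y\<in>S. degree X E y * card (edge_paths E (S - {y})))"
    by (simp add: degree_def)
  finally show ?thesis by simp
qed

lemma edge_paths_empty: "edge_paths E {} = {[]}"
  by (auto simp: edge_paths_def)

lemma card_edge_paths_le:
  assumes "finite X" "finite E" "E \<subseteq> X \<times> UNIV" "finite S" "\<forall>y\<in>S. 1 \<le> degree X E y"
  shows "real (card (edge_paths E S)) \<le> arrangements (card S) * (\<Prod>y\<in>S. real (degree X E y))"
  using assms(4,5)
proof (induction "card S" arbitrary: S)
  case 0
  then show ?case by (simp add: edge_paths_empty arrangements_0)
next
  case (Suc n S)
  let ?D = "\<lambda>S. \<Prod>y\<in>S. real (degree X E y)"
  have IH: "real (card (edge_paths E (S - {y}))) \<le> arrangements n * ?D (S - {y})" if "y \<in> S" for y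
  proof -
    have n: "n = card (S - {y})" using Suc.hyps(2) Suc.prems(1) that by simp
    show ?thesis using Suc.hyps(1)[OF n] Suc.prems n by auto
  qed
  have remove: "real (degree X E y) * ?D (S - {y}) = ?D S" if "y \<in> S" for y
    using prod.remove[OF Suc.prems(1) that, of "\<lambda>y. real (degree X E y)"] by simp
  have "real (card (edge_paths E S))
        \<le> real (Suc (\<Sum>y\<in>S. degree X E y * card (edge_paths E (S - {y}))))"
    using card_edge_paths_rec[OF assms(1-3) Suc.prems(1)] by (simp only: of_nat_le_iff)
  also have "\<dots> = 1 + (\<Sum>y\<in>S. real (degree X E y) * real (card (edge_paths E (S - {y}))))"
    by (simp add: of_nat_sum)
  also have "\<dots> \<le> 1 + (\<Sum>y\<in>S. real (degree X E y) * (arrangements n * ?D (S - {y})))"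
    using IH by (intro add_left_mono sum_mono mult_left_mono) auto
  also have "\<dots> = 1 + (\<Sum>y\<in>S. arrangements n * ?D S)"
    using remove by (intro arg_cong[where f = "(+) 1"] sum.cong refl) (metis mult.left_commute)
  also have "\<dots> = 1 + real (Suc n) * arrangements n * ?D S"
    using Suc.hyps(2) by simp
  also have "\<dots> \<le> ?D S + real (Suc n) * arrangements n * ?D S"
    using Suc.prems by (simp add: prod_ge_1)
  also have "\<dots> = arrangements (Suc n) * ?D S"
    by (simp add: arrangements_Suc algebra_simps)
  finally show ?case using Suc.hyps(2) by simp
qed
lemma card_edge_paths_le_phi:
  assumes "finite X" "finite Y" "E \<subseteq> X \<times> Y" "\<forall>y\<in>Y. \<exists>x. (x, y) \<in> E"
  shows "real (card (edge_paths E Y)) \<le> exp 1 * real (phi X Y E)"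
proof -
  have deg: "\<forall>y\<in>Y. 1 \<le> degree X E y"
  proof
    fix y assume "y \<in> Y"
    then obtain x where "(x, y) \<in> E" using assms(4) by blast
    then have "x \<in> {x\<in>X. (x, y) \<in> E}" using assms(3) by auto
    then show "1 \<le> degree X E y"
      unfolding degree_def using assms(1) card_0_eq[of "{x\<in>X. (x, y) \<in> E}"] by fastforce
  qed
  have "finite E" using assms(1-3) finite_subset by blast
  then have "real (card (edge_paths E Y)) \<le> arrangements (card Y) * (\<Prod>y\<in>Y. real (degree X E y))"
    using assms(1-3) deg by (intro card_edge_paths_le) auto
  also have "\<dots> \<le> exp 1 * fact (card Y) * (\<Prod>y\<in>Y. real (degree X E y))"
    using arrangements_le_exp by (intro mult_right_mono prod_nonneg) auto
  also have "\<dots> = exp 1 * real (phi X Y E)"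
    by (simp add: phi_def of_nat_prod)
  finally show ?thesis .
qed

lemma edge_val_append: "k < length p \<Longrightarrow> edge_val T (p @ q) k = edge_val T p k"
  by (simp add: edge_val_def nth_append_left split: option.split)

lemma blocked_append: "blocked E T p t \<Longrightarrow> blocked E T (p @ q) t"
  unfolding blocked_def by (metis edge_val_append length_append nth_append trans_less_add1)

lemma scan_step_fresh:
  assumes "T q = None" and "scan_step E l t T q \<noteq> None"
  shows "scan_step E l t T q = Some None" and "q \<noteq> []" and "T (butlast q) = Some None"
    and "\<not> blocked E T (butlast q) t" and "length (butlast q) < l" and "last q \<in> E"
    and "snd (last q) \<notin> snd ` set (butlast q)"
  using assms by (auto simp: scan_step_def split: if_splits)

locale tree_inv =
  fixes E :: "('x \<times> 'y) set" and l :: nat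
    and S :: "('x \<Rightarrow> 'v) set" and T :: "('x, 'y, 'v) tree"
  assumes root: "T [] \<noteq> None"
    and parent_labelled: "\<And>p e. T (p @ [e]) \<noteq> None \<Longrightarrow> \<exists>s. T p = Some (Some s)"
    and node_path: "\<And>p. T p \<noteq> None \<Longrightarrow> set p \<subseteq> E \<and> distinct (map snd p) \<and> length p \<le> l"
    and label_sound: "\<And>p s. T p = Some (Some s) \<Longrightarrow> s \<in> S \<and> \<not> blocked E T p s"
    and children: "\<And>p s e. T p = Some (Some s) \<Longrightarrow> length p < l \<Longrightarrow> e \<in> E \<Longrightarrow>
      snd e \<notin> snd ` set p \<Longrightarrow> T (p @ [e]) \<noteq> None"
    and pending_blocked: "\<And>p s. T p = Some None \<Longrightarrow> s \<in> S \<Longrightarrow> blocked E T p s"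
begin

lemma prefix_labelled:
  assumes "T p \<noteq> None" "k < length p"
  shows "\<exists>s. T (take k p) = Some (Some s)"
  using assms
proof (induction p arbitrary: k rule: rev_induct)
  case Nil then show ?case by simp
next
  case (snoc e q)
  obtain s where s: "T q = Some (Some s)" using parent_labelled snoc.prems(1) by blast
  show ?case
  proof (cases "k < length q")
    case True
    then show ?thesis using snoc.IH s by simp
  next
    case False
    then show ?thesis using snoc.prems(2) s by simp
  qed
qed

lemma scan_step_node:
  assumes "T q \<noteq> None"
  shows "scan_step E l t T q = (if T q = Some None \<and> \<not> blocked E T q t then Some (Some t) else T q)"
proof -
  have "\<not> (q \<noteq> [] \<and> T (butlast q) = Some None)"
    using parent_labelled[of "butlast q" "last q"] assms by fastforce
  then show ?thesis by (auto simp: scan_step_def)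
qed

lemma scan_step_new_child:
  assumes "T p = Some None" "\<not> blocked E T p t" "length p < l" "e \<in> E" "snd e \<notin> snd ` set p"
  shows "scan_step E l t T (p @ [e]) = Some None"
proof -
  have "T (p @ [e]) = None" using parent_labelled assms(1) by fastforce
  then show ?thesis using assms by (simp add: scan_step_def)
qed

lemma edge_val_scan_step:
  assumes "T p \<noteq> None" "k < length p"
  shows "edge_val (scan_step E l t T) p k = edge_val T p k"
proof -
  obtain s where "T (take k p) = Some (Some s)" using prefix_labelled assms by blast
  then show ?thesis using scan_step_node[of "take k p"] by (simp add: edge_val_def)
qed

lemma blocked_scan_step:
  assumes "T p \<noteq> None"
  shows "blocked E (scan_step E l t T) p s = blocked E T p s"
  unfolding blocked_def using edge_val_scan_step[OF assms] by metis

lemma scan_step_root: "scan_step E l t T [] \<noteq> None"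
  using scan_step_node[OF root] root by auto

lemma scan_step_parent_labelled:
  assumes "scan_step E l t T (p @ [e]) \<noteq> None"
  shows "\<exists>s. scan_step E l t T p = Some (Some s)"
proof (cases "T (p @ [e]) = None")
  case True
  then have "T p = Some None" "\<not> blocked E T p t"
    using scan_step_fresh[OF True assms] by auto
  then show ?thesis using scan_step_node by simp
next
  case False
  then obtain s where "T p = Some (Some s)" using parent_labelled by blast
  then show ?thesis using scan_step_node by auto
qed

lemma scan_step_node_path:
  assumes "scan_step E l t T p \<noteq> None"
  shows "set p \<subseteq> E \<and> distinct (map snd p) \<and> length p \<le> l"
proof (cases "T p = None")
  case True
  note fresh = scan_step_fresh[OF True assms]
  obtain b e where p: "p = b @ [e]" using fresh(2) by (metis append_butlast_last_id)
  then have "T b = Some None" "length b < l" "e \<in> E" "snd e \<notin> snd ` set b"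
    using fresh by auto
  then show ?thesis using node_path[of b] unfolding p by auto
next
  case False
  then show ?thesis using node_path by blast
qed

lemma scan_step_label_sound:
  assumes "scan_step E l t T p = Some (Some s)"
  shows "s \<in> insert t S \<and> \<not> blocked E (scan_step E l t T) p s"
proof -
  have node: "T p \<noteq> None" using scan_step_fresh(1)[of T p] assms by fastforce
  show ?thesis
    using assms label_sound[of p s] unfolding scan_step_node[OF node] blocked_scan_step[OF node]
    by (auto split: if_splits)
qed

lemma scan_step_children:
  assumes "scan_step E l t T p = Some (Some s)" "length p < l" "e \<in> E" "snd e \<notin> snd ` set p"
  shows "scan_step E l t T (p @ [e]) \<noteq> None"
proof -
  have node: "T p \<noteq> None" using scan_step_fresh(1)[of T p] assms(1) by fastforce
  show ?thesis
  proof (cases "T p = Some None \<and> \<not> blocked E T p t")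
    case True
    then show ?thesis using scan_step_new_child assms(2-4) by simp
  next
    case False
    then have "T p = Some (Some s)" using assms(1) scan_step_node[OF node] by auto
    then have "T (p @ [e]) \<noteq> None" using children assms(2-4) by blast
    then show ?thesis using scan_step_node by auto
  qed
qed

lemma scan_step_pending_blocked:
  assumes "scan_step E l t T p = Some None" "s \<in> insert t S"
  shows "blocked E (scan_step E l t T) p s"
proof (cases "T p = None")
  case False
  then have "T p = Some None" "blocked E T p t"
    using assms(1) scan_step_node[OF False] by (auto split: if_splits)
  then show ?thesis using assms(2) pending_blocked blocked_scan_step[OF False] by auto
next
  case True
  note fresh = scan_step_fresh[of T p E l t, OF True]
  obtain b e where p: "p = b @ [e]" using fresh(2) assms(1) by (metis append_butlast_last_id option.distinct(1))
  then have b: "T b = Some None" "\<not> blocked E T b t" "e \<in> E" using fresh assms(1) by auto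
  show ?thesis
  proof (cases "s = t")
    case True
    \<comment> \<open>the parent \<open>b\<close> has just been labelled \<open>t\<close>, and the new edge carries \<open>t[fst e]\<close>\<close>
    have "edge_val (scan_step E l t T) p (length b) = t (fst e)"
      using b scan_step_node[of b] p by (simp add: edge_val_def)
    then show ?thesis using True b(3) unfolding blocked_def p
      by (intro exI[of _ "length b"]) (auto intro!: exI[of _ "fst e"])
  next
    case False
    then have "blocked E T b s" using assms(2) pending_blocked b(1) by auto
    then have "blocked E (scan_step E l t T) b s" using blocked_scan_step[of b] b(1) by simp
    then show ?thesis unfolding p by (rule blocked_append)
  qed
qed

lemma tree_inv_scan_step: "tree_inv E l (insert t S) (scan_step E l t T)"
  by (rule tree_inv.intro)
    (fact scan_step_root scan_step_parent_labelled scan_step_node_path scan_step_label_sound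
      scan_step_children scan_step_pending_blocked)+

end

lemma tree_inv_init: "tree_inv E l {} init_tree"
  by unfold_locales (auto simp: init_tree_def split: if_splits)

lemma tree_inv_fold: "tree_inv E l S T \<Longrightarrow> tree_inv E l (S \<union> set ts) (fold (scan_step E l) ts T)"
proof (induction ts arbitrary: S T)
  case (Cons t ts)
  from Cons.IH[OF tree_inv.tree_inv_scan_step[OF Cons.prems]] show ?case by simp
qed simp

lemma tree_inv_build_tree: "tree_inv E l (set ts) (build_tree E l ts)"
  using tree_inv_fold[OF tree_inv_init] by (simp add: build_tree_def)

definition follows_tuple :: "('x, 'y, 'v) tree \<Rightarrow> ('x \<times> 'y) list \<Rightarrow> ('y \<Rightarrow> 'v) \<Rightarrow> bool" where
  "follows_tuple T p t \<longleftrightarrow> (\<forall>k<length p. edge_val T p k = t (snd (p ! k)))"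

lemma follows_tuple_snoc:
  "follows_tuple T (p @ [e]) t \<longleftrightarrow>
    follows_tuple T p t \<and> edge_val T (p @ [e]) (length p) = t (snd e)"
  unfolding follows_tuple_def by (auto simp: less_Suc_eq nth_append_left edge_val_append)

lemma length_less_card_if_missing:
  assumes "finite Y" "snd ` set p \<subseteq> Y" "distinct (map snd p)" "y \<in> Y" "y \<notin> snd ` set p"
  shows "length p < card Y"
proof -
  have "Suc (length p) = card (insert y (snd ` set p))"
    using assms(3,5) distinct_card[OF assms(3)] by simp
  also have "\<dots> \<le> card Y"
    using assms by (intro card_mono) auto
  finally show ?thesis by simp
qed

lemma H_equivalent_if_subset:
  assumes "R' \<subseteq> R"
    and "\<And>tR t. tR \<in> R \<Longrightarrow> \<forall>(x, y)\<in>E. tR x \<noteq> t y \<Longrightarrow> \<exists>s\<in>R'. \<forall>(x, y)\<in>E. s x \<noteq> t y"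
  shows "H_equivalent E R' R"
  using assms unfolding H_equivalent_def H_accepts_def by blast

context tree_inv
begin

lemma follows_tuple_labelled:
  assumes "T p \<noteq> None" "follows_tuple T p t" "tR \<in> S" "\<forall>(x, y)\<in>E. tR x \<noteq> t y"
  shows "\<exists>s. T p = Some (Some s)"
proof -
  have "\<not> blocked E T p tR"
    using assms(2,4) unfolding blocked_def follows_tuple_def by fastforce
  then have "T p \<noteq> Some None" using assms(3) pending_blocked by blast
  then show ?thesis using assms(1) by (cases "T p") auto
qed

lemma follows_tuple_child:
  assumes "E \<subseteq> X \<times> Y" "finite Y" "l = card Y"
    and "T p = Some (Some s)" "follows_tuple T p t" "(x, y) \<in> E" "s x = t y"
  shows "T (p @ [(x, y)]) \<noteq> None \<and> follows_tuple T (p @ [(x, y)]) t"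
proof -
  have y_new: "y \<notin> snd ` set p"
  proof
    assume "y \<in> snd ` set p"
    then obtain k where "k < length p" "snd (p ! k) = y" by (metis imageE in_set_conv_nth)
    then have "blocked E T p s"
      using assms(5-7) unfolding blocked_def follows_tuple_def by fastforce
    with label_sound assms(4) show False by blast
  qed
  have "set p \<subseteq> E" "distinct (map snd p)" using node_path assms(4) by auto
  then have "length p < l"
    unfolding assms(3) using assms(1,2,6) y_new by (intro length_less_card_if_missing) auto
  then have "T (p @ [(x, y)]) \<noteq> None" using children[OF assms(4) _ assms(6)] y_new by simp
  moreover have "follows_tuple T (p @ [(x, y)]) t"
    using assms(4,5,7) by (simp add: follows_tuple_snoc edge_val_def)
  ultimately show ?thesis ..
qed

lemma exists_labelled_accepting:
  assumes "E \<subseteq> X \<times> Y" "finite Y" "l = card Y" "tR \<in> S" "\<forall>(x, y)\<in>E. tR x \<noteq> t y"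
  shows "\<exists>p s. T p = Some (Some s) \<and> (\<forall>(x, y)\<in>E. s x \<noteq> t y)"
proof -
  have "\<exists>p s. T p = Some (Some s) \<and> (\<forall>(x, y)\<in>E. s x \<noteq> t y)"
    if "T p \<noteq> None" "follows_tuple T p t" for p
    using that
  proof (induction "l - length p" arbitrary: p rule: less_induct)
    case less
    obtain s where s: "T p = Some (Some s)"
      using follows_tuple_labelled less.prems assms(4,5) by blast
    show ?case
    proof (cases "\<forall>(x, y)\<in>E. s x \<noteq> t y")
      case True
      with s show ?thesis by blast
    next
      case False
      then obtain x y where "(x, y) \<in> E" "s x = t y" by blast
      then have child: "T (p @ [(x, y)]) \<noteq> None" "follows_tuple T (p @ [(x, y)]) t"
        using follows_tuple_child[OF assms(1-3) s less.prems(2)] by auto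
      moreover have "length (p @ [(x, y)]) \<le> l" using node_path child(1) by blast
      ultimately show ?thesis using less.hyps[of "p @ [(x, y)]"] by fastforce
    qed
  qed
  then show ?thesis using root by (simp add: follows_tuple_def)
qed

lemma card_labels_le:
  assumes "finite X" "finite Y" "E \<subseteq> X \<times> Y"
  shows "card {s. \<exists>p. T p = Some (Some s)} \<le> card (edge_paths E Y)"
proof -
  let ?N = "{p. \<exists>s. T p = Some (Some s)}"
  have N: "?N \<subseteq> edge_paths E Y"
    using node_path assms(3) by (fastforce simp: edge_paths_def)
  have fin: "finite (edge_paths E Y)"
    using assms finite_subset by (intro edge_paths_finite) auto
  have "{s. \<exists>p. T p = Some (Some s)} = (\<lambda>p. the (the (T p))) ` ?N"
    by force
  then have "card {s. \<exists>p. T p = Some (Some s)} \<le> card ?N"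
    by (simp add: card_image_le finite_subset[OF N fin])
  also have "\<dots> \<le> card (edge_paths E Y)"
    using card_mono[OF fin N] .
  finally show ?thesis .
qed

end

theorem lemma3:
  fixes X :: "'x set" and Y :: "'y set" and E :: "('x \<times> 'y) set"
    and R :: "('x \<Rightarrow> 'v) set" and ts :: "('x \<Rightarrow> 'v) list"
  assumes "finite X" and "finite Y" and "E \<subseteq> X \<times> Y"
    and "\<forall>y\<in>Y. \<exists>x. (x, y) \<in> E"
    and "R \<subseteq> {t. \<forall>x. x \<notin> X \<longrightarrow> t x = undefined}"
    and "distinct ts" and "set ts = R"
  shows "H_equivalent E (extracted E (card Y) ts) R
         \<and> real (card (extracted E (card Y) ts)) \<le> exp 1 * real (phi X Y E)"
proof -
  interpret tree_inv E "card Y" R "build_tree E (card Y) ts"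
    using tree_inv_build_tree[of E "card Y" ts] assms(7) by simp
  have "H_equivalent E (extracted E (card Y) ts) R"
  proof (rule H_equivalent_if_subset)
    show "extracted E (card Y) ts \<subseteq> R"
      using label_sound unfolding extracted_def by blast
    show "\<exists>s\<in>extracted E (card Y) ts. \<forall>(x, y)\<in>E. s x \<noteq> t y"
      if "tR \<in> R" "\<forall>(x, y)\<in>E. tR x \<noteq> t y" for tR t
      using exists_labelled_accepting[OF assms(3,2) refl that] unfolding extracted_def by blast
  qed
  moreover have "card (extracted E (card Y) ts) \<le> card (edge_paths E Y)"
    using card_labels_le[OF assms(1-3)] unfolding extracted_def .
  ultimately show ?thesis
    using card_edge_paths_le_phi[OF assms(1-4)] by (meson of_nat_le_iff order_trans)
qed

end
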